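(* Consider an episode in which the first event is an original post with probability $\alpha\in[0,1]$ and a repost with probability $1-\alpha$, the number of segments is $1+S$ with $S\sim\mathrm{Pois}(\gamma)$, $\gamma\ge0$, the segments alternate in type (original-post segment, repost segment, ...) starting with the type of the first event, and, independently, each original-post segment contains $1+\mathrm{Pois}(\mu_1)$ events and each repost segment contains $1+\mathrm{Pois}(\mu_0)$ events ($\mu_1,\mu_0\ge0$). Then the expected total number of events in the episode equals $$\frac12(2+\mu_1+\mu_0)(\gamma+1)+c(\gamma,\alpha)(\mu_1-\mu_0),\qquad c(\gamma,\alpha)=e^{-\gamma}\Big(\alpha-\frac12\Big)\sum_{k=0}^\infty\frac{\gamma^{2k}}{(2k)!}.$$
   Context: An episode is a cluster of posts consisting of consecutive segments; a segment is a maximal run of events of the same type (original post or repost). *)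

theory Defs
  imports "HOL-Probability.Probability"
begin

text \<open>Poisson distribution with rate r \<ge> 0 (rate 0 gives the point mass at 0).
  The library's poisson_pmf requires a strictly positive rate, so we use the
  explicit mass function.\<close>
definition pois :: "real \<Rightarrow> nat pmf" where
  "pois r = embed_pmf (\<lambda>k. r ^ k / fact k * exp (- r))"

text \<open>Total number of events in n consecutive alternating segments, the first of
  which is an original-post segment iff b.\<close>
fun seg_total :: "real \<Rightarrow> real \<Rightarrow> bool \<Rightarrow> nat \<Rightarrow> nat pmf" where
  "seg_total mu1 mu0 b 0 = return_pmf 0"
| "seg_total mu1 mu0 b (Suc n) =
     bind_pmf (pois (if b then mu1 else mu0)) (\<lambda>x.
     bind_pmf (seg_total mu1 mu0 (\<not> b) n) (\<lambda>r.
     return_pmf (1 + x + r)))"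

definition episode_total :: "real \<Rightarrow> real \<Rightarrow> real \<Rightarrow> real \<Rightarrow> nat pmf" where
  "episode_total alpha gamma mu1 mu0 =
     bind_pmf (bernoulli_pmf alpha) (\<lambda>b.
     bind_pmf (pois gamma) (\<lambda>s.
     seg_total mu1 mu0 b (Suc s)))"

end

theory Submission
  imports Defs
begin

text \<open>Given the type b of the first segment and S = s, the s + 1 alternating segments consist of
  \<lceil>(s+1)/2\<rceil> segments of type b and \<lfloor>(s+1)/2\<rfloor> of the other type, so the conditional mean
  is (s+1)(1 + (mu1+mu0)/2), corrected by \<plusminus>(mu1-mu0)/2 exactly when s is even. Averaging over
  S ~ Pois(gamma) turns this parity indicator into P(S even) = exp(-gamma) cosh gamma, and averaging
  over the first type turns the sign into alpha - 1/2. Everything is computed as a nonnegative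
  integral, which gives integrability at the same time.\<close>

lemma nn_integral_pmf_nat_sums:
  fixes p :: "nat pmf" and f :: "nat \<Rightarrow> real"
  assumes "\<And>k. 0 \<le> f k" and "(\<lambda>k. pmf p k * f k) sums V"
  shows "(\<integral>\<^sup>+ k. ennreal (f k) \<partial>measure_pmf p) = ennreal V"
proof -
  have "(\<integral>\<^sup>+ k. ennreal (f k) \<partial>measure_pmf p) = (\<Sum>k. ennreal (pmf p k * f k))"
    by (simp add: nn_integral_measure_pmf nn_integral_count_space_nat ennreal_mult assms(1))
  also have "\<dots> = ennreal V"
    using assms by (intro suminf_ennreal_eq) auto
  finally show ?thesis .
qed

lemma sums_poisson_weights: "(\<lambda>k. r ^ k / fact k * exp (- r)) sums (1::real)"
proof -
  have "(\<lambda>k. r ^ k /\<^sub>R fact k * exp (- r)) sums (exp r * exp (- r))"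
    by (intro sums_mult2 exp_converges)
  then show ?thesis
    by (simp add: divide_inverse exp_minus mult_ac)
qed

lemma pmf_pois:
  assumes "0 \<le> r"
  shows "pmf (pois r) k = r ^ k / fact k * exp (- r)"
  unfolding pois_def
proof (rule pmf_embed_pmf)
  show "0 \<le> r ^ k / fact k * exp (- r)" for k
    using assms by simp
  have "(\<Sum>k. ennreal (r ^ k / fact k * exp (- r))) = ennreal 1"
    using assms by (intro suminf_ennreal_eq sums_poisson_weights) simp
  then show "(\<integral>\<^sup>+ k. ennreal (r ^ k / fact k * exp (- r)) \<partial>count_space UNIV) = 1"
    by (simp add: nn_integral_count_space_nat)
qed

lemma sums_pmf_pois: "0 \<le> r \<Longrightarrow> (\<lambda>k. pmf (pois r) k) sums 1"
  by (simp only: pmf_pois sums_poisson_weights)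

lemma sums_pmf_pois_mean:
  assumes "0 \<le> r"
  shows "(\<lambda>k. pmf (pois r) k * real k) sums r"
proof -
  have "pmf (pois r) (Suc k) * real (Suc k) = r * pmf (pois r) k" for k
    using assms by (simp add: pmf_pois field_simps del: of_nat_Suc)
  then have "(\<lambda>k. pmf (pois r) (Suc k) * real (Suc k)) sums (r * 1)"
    using sums_mult[OF sums_pmf_pois[OF assms], of r] by simp
  then show ?thesis
    by (subst (asm) sums_Suc_iff) simp
qed

lemma sums_pmf_pois_even:
  assumes "0 \<le> r"
  shows "(\<lambda>k. pmf (pois r) k * of_bool (even k)) sums (exp (- r) * cosh r)"
proof -
  have "(\<lambda>k. (if even k then r ^ k /\<^sub>R fact k else 0) * exp (- r)) sums (cosh r * exp (- r))"
    by (intro sums_mult2 cosh_converges)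
  moreover have "pmf (pois r) k * of_bool (even k) = (if even k then r ^ k /\<^sub>R fact k else 0) * exp (- r)" for k
    using assms by (simp add: pmf_pois divide_inverse)
  ultimately show ?thesis
    by (simp add: mult.commute)
qed

lemma sums_cosh_even_powers: "(\<lambda>k. (r::real) ^ (2 * k) / fact (2 * k)) sums cosh r"
proof -
  have "(\<lambda>k. (\<lambda>n. if even n then r ^ n /\<^sub>R fact n else 0) (2 * k)) sums cosh r"
    by (subst sums_mono_reindex) (auto simp: strict_mono_def cosh_converges)
  then show ?thesis
    by (simp add: divide_inverse_commute)
qed

definition seg_mean :: "real \<Rightarrow> real \<Rightarrow> bool \<Rightarrow> nat \<Rightarrow> real" where
  "seg_mean mu1 mu0 b n =
     real n * (1 + (mu1 + mu0) / 2) + (if b then mu1 - mu0 else mu0 - mu1) / 2 * of_bool (odd n)"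

lemma seg_mean_Suc:
  "seg_mean mu1 mu0 b (Suc n) = 1 + (if b then mu1 else mu0) + seg_mean mu1 mu0 (\<not> b) n"
  by (cases "even n") (auto simp: seg_mean_def field_simps)

lemma seg_mean_nonneg:
  assumes "0 \<le> mu1" "0 \<le> mu0"
  shows "0 \<le> seg_mean mu1 mu0 b n"
proof (cases "odd n")
  case True
  then have "1 \<le> real n" by (cases n) auto
  then have "1 + (mu1 + mu0) / 2 \<le> real n * (1 + (mu1 + mu0) / 2)"
    using mult_right_mono[of 1 "real n" "1 + (mu1 + mu0) / 2"] assms by simp
  with assms True show ?thesis
    unfolding seg_mean_def by (cases b) (simp_all add: field_simps)
qed (use assms in \<open>simp add: seg_mean_def\<close>)

lemma nn_integral_seg_total:
  assumes "0 \<le> mu1" "0 \<le> mu0"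
  shows "(\<integral>\<^sup>+ x. ennreal (real x) \<partial>measure_pmf (seg_total mu1 mu0 b n)) = ennreal (seg_mean mu1 mu0 b n)"
proof (induction n arbitrary: b)
  case 0
  then show ?case by (simp add: seg_mean_def)
next
  case (Suc n)
  let ?m = "if b then mu1 else mu0"
  let ?rest = "seg_total mu1 mu0 (\<not> b) n"
  let ?E = "seg_mean mu1 mu0 (\<not> b) n"
  have E_nonneg: "0 \<le> ?E"
    using assms by (rule seg_mean_nonneg)
  have inner: "(\<integral>\<^sup>+ r. ennreal (real (1 + x + r)) \<partial>measure_pmf ?rest) = ennreal (1 + real x + ?E)" for x
  proof -
    have "(\<integral>\<^sup>+ r. ennreal (real (1 + x + r)) \<partial>measure_pmf ?rest)
        = (\<integral>\<^sup>+ r. ennreal (1 + real x) + ennreal (real r) \<partial>measure_pmf ?rest)"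
      by (intro nn_integral_cong) (simp add: ennreal_plus[symmetric] del: ennreal_plus)
    also have "\<dots> = ennreal (1 + real x) + ennreal ?E"
      by (simp add: nn_integral_add measure_pmf.emeasure_space_1 Suc.IH)
    finally show ?thesis
      using E_nonneg by (simp add: ennreal_plus[symmetric] del: ennreal_plus)
  qed
  have "(\<lambda>x. (1 + ?E) * pmf (pois ?m) x + pmf (pois ?m) x * real x) sums ((1 + ?E) * 1 + ?m)"
    using assms by (intro sums_add sums_mult sums_pmf_pois sums_pmf_pois_mean) auto
  then have "(\<lambda>x. pmf (pois ?m) x * (1 + real x + ?E)) sums seg_mean mu1 mu0 b (Suc n)"
    by (simp add: seg_mean_Suc algebra_simps)
  then have "(\<integral>\<^sup>+ x. ennreal (1 + real x + ?E) \<partial>measure_pmf (pois ?m)) = ennreal (seg_mean mu1 mu0 b (Suc n))"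
    using E_nonneg by (intro nn_integral_pmf_nat_sums) auto
  then show ?case
    unfolding seg_total.simps nn_integral_bind_pmf nn_integral_return_pmf[OF zero_le] inner .
qed

lemma sums_pmf_pois_seg_mean:
  assumes "0 \<le> gamma"
  shows "(\<lambda>s. pmf (pois gamma) s * seg_mean mu1 mu0 b (Suc s)) sums
           ((1 + (mu1 + mu0) / 2) * (1 + gamma)
            + (if b then mu1 - mu0 else mu0 - mu1) / 2 * (exp (- gamma) * cosh gamma))"
proof -
  let ?M = "1 + (mu1 + mu0) / 2" and ?d = "(if b then mu1 - mu0 else mu0 - mu1) / 2"
  have "(\<lambda>s. ?M * (pmf (pois gamma) s + pmf (pois gamma) s * real s)
              + ?d * (pmf (pois gamma) s * of_bool (even s)))
        sums (?M * (1 + gamma) + ?d * (exp (- gamma) * cosh gamma))"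
    using assms by (intro sums_add sums_mult sums_pmf_pois sums_pmf_pois_mean sums_pmf_pois_even)
  then show ?thesis
    by (rule iffD1[OF sums_cong, rotated]) (simp add: seg_mean_def field_simps)
qed

lemma has_bochner_integral_episode_total:
  assumes "0 \<le> alpha" "alpha \<le> 1" "0 \<le> gamma" "0 \<le> mu1" "0 \<le> mu0"
  shows "has_bochner_integral (measure_pmf (episode_total alpha gamma mu1 mu0)) real
           ((1 + (mu1 + mu0) / 2) * (1 + gamma)
            + (alpha - 1/2) * (mu1 - mu0) * (exp (- gamma) * cosh gamma))"
proof -
  define H where "H b = (1 + (mu1 + mu0) / 2) * (1 + gamma)
    + (if b then mu1 - mu0 else mu0 - mu1) / 2 * (exp (- gamma) * cosh gamma)" for b
  have H_sums: "(\<lambda>s. pmf (pois gamma) s * seg_mean mu1 mu0 b (Suc s)) sums H b" for b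
    unfolding H_def using assms(3) by (rule sums_pmf_pois_seg_mean)
  have H_nonneg: "0 \<le> H b" for b
    using assms by (intro sums_le[OF _ sums_zero H_sums]) (simp add: seg_mean_nonneg)
  have given_first: "(\<integral>\<^sup>+ s. (\<integral>\<^sup>+ x. ennreal (real x) \<partial>measure_pmf (seg_total mu1 mu0 b (Suc s)))
      \<partial>measure_pmf (pois gamma)) = ennreal (H b)" for b
    unfolding nn_integral_seg_total[OF assms(4,5)]
    using assms by (intro nn_integral_pmf_nat_sums H_sums seg_mean_nonneg)
  let ?E = "H True * alpha + H False * (1 - alpha)"
  have E_nonneg: "0 \<le> ?E"
    using assms H_nonneg by simp
  have "(\<integral>\<^sup>+ x. ennreal (real x) \<partial>measure_pmf (episode_total alpha gamma mu1 mu0)) = ennreal ?E"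
    unfolding episode_total_def nn_integral_bind_pmf given_first
    using assms H_nonneg
    by (simp add: ennreal_mult[symmetric] ennreal_plus[symmetric] del: ennreal_plus)
  then have "has_bochner_integral (measure_pmf (episode_total alpha gamma mu1 mu0)) real ?E"
    using E_nonneg by (intro has_bochner_integral_nn_integral) auto
  moreover have "?E = (1 + (mu1 + mu0) / 2) * (1 + gamma)
      + (alpha - 1/2) * (mu1 - mu0) * (exp (- gamma) * cosh gamma)"
    by (simp add: H_def field_simps)
  ultimately show ?thesis
    by simp
qed

theorem mainTheorem4:
  fixes alpha gamma mu1 mu0 :: real
  assumes "0 \<le> alpha" "alpha \<le> 1" "0 \<le> gamma" "0 \<le> mu1" "0 \<le> mu0"
  shows "integrable (measure_pmf (episode_total alpha gamma mu1 mu0)) real \<and>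
         measure_pmf.expectation (episode_total alpha gamma mu1 mu0) real =
           (1/2) * (2 + mu1 + mu0) * (gamma + 1)
           + (exp (- gamma) * (alpha - 1/2) * (\<Sum>k. gamma ^ (2*k) / fact (2*k))) * (mu1 - mu0)"
proof -
  have "(\<Sum>k. gamma ^ (2*k) / fact (2*k)) = cosh gamma"
    using sums_cosh_even_powers by (rule sums_unique[symmetric])
  then have "(1/2) * (2 + mu1 + mu0) * (gamma + 1)
           + (exp (- gamma) * (alpha - 1/2) * (\<Sum>k. gamma ^ (2*k) / fact (2*k))) * (mu1 - mu0)
      = (1 + (mu1 + mu0) / 2) * (1 + gamma) + (alpha - 1/2) * (mu1 - mu0) * (exp (- gamma) * cosh gamma)"
    by (simp add: field_simps)
  then show ?thesis
    using has_bochner_integral_episode_total[OF assms] by (simp add: has_bochner_integral_iff)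
qed

end
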